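(* Let $n\ge1$, suppose $\lambda\ge\frac{n+2}{n}$ and $\gamma=\frac{n+2-\varepsilon}{2\lambda}$ for some $\varepsilon\in(0,1)$. Then there exists a $C^\infty$ positive solution $u$ of $u_t-\Delta u=0$ in $\mathbb{R}^n\times(0,\infty)$ such that $u\in L^\lambda(\mathbb{R}^n\times(0,T))$ for all $T>0$ and $u(0,t)=t^{-\gamma}$ for all $t>0$. *)

theory Defs
  imports "HOL-Analysis.Analysis"
begin

definition pdiff :: "'a::euclidean_space \<Rightarrow> ('a \<Rightarrow> real) \<Rightarrow> 'a \<Rightarrow> real" where
  "pdiff e f z = frechet_derivative f (at z) e"

fun Ck_on :: "nat \<Rightarrow> 'a::euclidean_space set \<Rightarrow> ('a \<Rightarrow> real) \<Rightarrow> bool" where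
  "Ck_on 0 S f = continuous_on S f"
| "Ck_on (Suc k) S f = (continuous_on S f \<and> f differentiable_on S \<and>
      (\<forall>e\<in>Basis. Ck_on k S (pdiff e f)))"

definition smooth_on :: "'a::euclidean_space set \<Rightarrow> ('a \<Rightarrow> real) \<Rightarrow> bool" where
  "smooth_on S f = (\<forall>k. Ck_on k S f)"

end

theory Submission
  imports Defs
begin

text \<open>
  The solution is self-similar, \<open>u(x,t) = t^(-\<gamma>) F(|x|^2/(4t))\<close>. For such \<open>u\<close> the heat equation
  becomes Kummer's equation \<open>s F'' + (b + s) F' + a F = 0\<close> with \<open>a = \<gamma>\<close>, \<open>b = n/2\<close>, and the
  hypotheses give \<open>0 < a < b\<close>. Then \<open>F(s) = e^(-s) M(b - a, b, s)\<close> solves it with \<open>F(0) = 1\<close>,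
  and \<open>F > 0\<close> because \<open>M(b - a, b, \<cdot>)\<close> has positive Taylor coefficients. These coefficients
  also give \<open>M'' - 2M' + M \<ge> 0\<close>, that is \<open>F'' \<ge> 0\<close>; Kummer's equation then makes
  \<open>F(s) (b + s)^a\<close> nonincreasing, so \<open>F(s) \<le> (b/(b + s))^a\<close>. Hence \<open>u^\<lambda>\<close> is dominated by a multiple
  of \<open>t^(-\<gamma>\<lambda>) \<Prod>\<^sub>i (1 + x\<^sub>i^2/(4t))^(-\<gamma>\<lambda>/n)\<close>, whose integral over \<open>\<real>^n \<times> (0,T)\<close> factorizes by
  Tonelli and is finite precisely because \<open>\<gamma>\<lambda>/n > 1/2\<close> and \<open>n/2 - \<gamma>\<lambda> > -1\<close>.
\<close>

section \<open>Partial derivatives and \<open>C\<^sup>k\<close> functions\<close>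

lemma pdiff_eq_has_derivative:
  "(f has_derivative f') (at z) \<Longrightarrow> pdiff e f z = f' e"
  unfolding pdiff_def using frechet_derivative_at by metis

lemma pdiff_cong_open:
  assumes "open S" "z \<in> S" "\<And>y. y \<in> S \<Longrightarrow> f y = g y"
  shows "pdiff e f z = pdiff e g z"
proof -
  have "(f has_derivative f') (at z) \<longleftrightarrow> (g has_derivative f') (at z)" for f'
  proof
    assume "(f has_derivative f') (at z)"
    then show "(g has_derivative f') (at z)"
      by (rule has_derivative_transform_within_open[OF _ assms(1,2)]) (simp add: assms(3))
  next
    assume "(g has_derivative f') (at z)"
    then show "(f has_derivative f') (at z)"
      by (rule has_derivative_transform_within_open[OF _ assms(1,2)]) (simp add: assms(3))
  qed
  then show ?thesis unfolding pdiff_def frechet_derivative_def by simp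
qed

lemma pdiff_eq_line_derivative:
  assumes "f differentiable (at z)"
    and "((\<lambda>h. f (z + h *\<^sub>R e)) has_real_derivative D) (at 0)"
  shows "pdiff e f z = D"
proof -
  obtain f' where f': "(f has_derivative f') (at z)"
    using assms(1) by (auto simp: differentiable_def)
  have "((\<lambda>h. z + h *\<^sub>R e) has_derivative (\<lambda>h. h *\<^sub>R e)) (at 0)"
    by (auto intro!: derivative_eq_intros)
  from has_derivative_compose[OF this] f'
  have "((\<lambda>h. f (z + h *\<^sub>R e)) has_derivative (\<lambda>h. f' (h *\<^sub>R e))) (at 0)" by simp
  moreover have "(\<lambda>h. f' (h *\<^sub>R e)) = (\<lambda>h. f' e * h)"
    using linear_cmul[OF has_derivative_linear[OF f']] by (simp add: fun_eq_iff)
  ultimately have "((\<lambda>h. f (z + h *\<^sub>R e)) has_real_derivative f' e) (at 0)"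
    by (simp add: has_field_derivative_def)
  then have "D = f' e" using assms(2) DERIV_unique by blast
  then show ?thesis using pdiff_eq_has_derivative[OF f'] by simp
qed

lemma Ck_on_SucD: "Ck_on (Suc k) S f \<Longrightarrow> Ck_on k S f"
proof (induction k arbitrary: f)
  case (Suc k)
  then show ?case by (metis Ck_on.simps(2))
qed simp

lemma Ck_on_Suc_has_derivative:
  assumes "open S" "Ck_on (Suc k) S f" "z \<in> S"
  obtains f' where "(f has_derivative f') (at z)"
proof -
  have "f differentiable (at z within S)" using assms(2,3) by (simp add: differentiable_on_def)
  then show ?thesis
    using that at_within_open[OF assms(3,1)] by (auto simp: differentiable_def)
qed

lemma Ck_on_cong_open:
  assumes "open S" "\<And>z. z \<in> S \<Longrightarrow> f z = g z" "Ck_on k S f"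
  shows "Ck_on k S g"
  using assms(2,3)
proof (induction k arbitrary: f g)
  case 0
  then show ?case using continuous_on_cong[OF refl, of S f g] by simp
next
  case (Suc k)
  have "continuous_on S g"
    using Suc.prems continuous_on_cong[OF refl, of S f g] by simp
  moreover have "g differentiable_on S"
    unfolding differentiable_on_def
  proof
    fix z assume z: "z \<in> S"
    obtain f' where "(f has_derivative f') (at z)"
      using Ck_on_Suc_has_derivative[OF assms(1) Suc.prems(2) z] .
    then have "(g has_derivative f') (at z)"
      using has_derivative_transform_within_open[OF _ assms(1) z] Suc.prems(1) by blast
    then show "g differentiable (at z within S)"
      by (auto simp: differentiable_def intro: has_derivative_at_withinI)
  qed
  moreover have "Ck_on k S (pdiff e g)" if "e \<in> Basis" for e
  proof (rule Suc.IH)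
    show "pdiff e f z = pdiff e g z" if "z \<in> S" for z
      using pdiff_cong_open[OF assms(1) that] Suc.prems(1) by blast
    show "Ck_on k S (pdiff e f)" using Suc.prems(2) \<open>e \<in> Basis\<close> by simp
  qed
  ultimately show ?case by simp
qed

lemma Ck_on_const: "Ck_on k S (\<lambda>z. c)"
proof (induction k arbitrary: c)
  case (Suc k)
  have "pdiff e (\<lambda>z::'a. c) = (\<lambda>z. 0)" for e
  proof
    show "pdiff e (\<lambda>z. c) x = 0" for x :: 'a
      by (rule pdiff_eq_has_derivative) simp
  qed
  then show ?case using Suc.IH[of 0] by (simp add: differentiable_const)
qed simp

lemma Ck_on_bounded_linear:
  assumes "bounded_linear f"
  shows "Ck_on k S f"
proof (cases k)
  case (Suc k')
  have "pdiff e f = (\<lambda>z. f e)" for e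
    using pdiff_eq_has_derivative[OF bounded_linear_imp_has_derivative[OF assms]]
    by (simp add: fun_eq_iff)
  then show ?thesis
    using Suc linear_continuous_on[OF assms] bounded_linear_imp_differentiable_on[OF assms]
    by (simp add: Ck_on_const)
qed (simp add: assms linear_continuous_on)

lemma Ck_on_add:
  assumes "open S" "Ck_on k S f" "Ck_on k S g"
  shows "Ck_on k S (\<lambda>z. f z + g z)"
  using assms(2,3)
proof (induction k arbitrary: f g)
  case 0 then show ?case by (simp add: continuous_on_add)
next
  case (Suc k)
  have "Ck_on k S (pdiff e (\<lambda>z. f z + g z))" if e: "e \<in> Basis" for e
  proof (rule Ck_on_cong_open[OF assms(1)])
    show "Ck_on k S (\<lambda>z. pdiff e f z + pdiff e g z)" using Suc e by simp
    fix z assume z: "z \<in> S"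
    obtain f' where f': "(f has_derivative f') (at z)"
      using Ck_on_Suc_has_derivative[OF assms(1) Suc.prems(1) z] .
    obtain g' where g': "(g has_derivative g') (at z)"
      using Ck_on_Suc_has_derivative[OF assms(1) Suc.prems(2) z] .
    show "pdiff e f z + pdiff e g z = pdiff e (\<lambda>z. f z + g z) z"
      using pdiff_eq_has_derivative[OF f'] pdiff_eq_has_derivative[OF g']
        pdiff_eq_has_derivative[OF has_derivative_add[OF f' g']] by simp
  qed
  then show ?case using Suc.prems
    by (auto intro!: continuous_on_add differentiable_on_add)
qed

lemma Ck_on_mult:
  assumes "open S" "Ck_on k S f" "Ck_on k S g"
  shows "Ck_on k S (\<lambda>z. f z * g z)"
  using assms(2,3)
proof (induction k arbitrary: f g)
  case 0 then show ?case by (simp add: continuous_on_mult)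
next
  case (Suc k)
  have "Ck_on k S (pdiff e (\<lambda>z. f z * g z))" if e: "e \<in> Basis" for e
  proof (rule Ck_on_cong_open[OF assms(1)])
    show "Ck_on k S (\<lambda>z. f z * pdiff e g z + pdiff e f z * g z)"
      using Suc e Ck_on_SucD[of k S f] Ck_on_SucD[of k S g]
      by (intro Ck_on_add[OF assms(1)] Suc.IH) auto
    fix z assume z: "z \<in> S"
    obtain f' where f': "(f has_derivative f') (at z)"
      using Ck_on_Suc_has_derivative[OF assms(1) Suc.prems(1) z] .
    obtain g' where g': "(g has_derivative g') (at z)"
      using Ck_on_Suc_has_derivative[OF assms(1) Suc.prems(2) z] .
    show "f z * pdiff e g z + pdiff e f z * g z = pdiff e (\<lambda>z. f z * g z) z"
      using pdiff_eq_has_derivative[OF f'] pdiff_eq_has_derivative[OF g']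
        pdiff_eq_has_derivative[OF has_derivative_mult[OF f' g']] by simp
  qed
  then show ?case using Suc.prems
    by (auto intro!: continuous_on_mult differentiable_on_mult)
qed

lemma Ck_on_sum:
  assumes "open S" "finite I" "\<And>i. i \<in> I \<Longrightarrow> Ck_on k S (f i)"
  shows "Ck_on k S (\<lambda>z. \<Sum>i\<in>I. f i z)"
  using assms(2,3)
  by (induction I rule: finite_induct) (simp_all add: Ck_on_const Ck_on_add[OF assms(1)])

lemma has_derivative_compose_real:
  assumes "(f has_derivative f') (at z)" "(g has_real_derivative g') (at (f z))"
  shows "((\<lambda>z. g (f z)) has_derivative (\<lambda>h. f' h * g')) (at z)"
  using has_derivative_compose[OF assms(1) assms(2)[THEN has_field_derivative_imp_has_derivative]]
  by (simp add: mult.commute)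

lemma Ck_on_compose_derivative_tower:
  assumes "open S" "\<And>z. z \<in> S \<Longrightarrow> f z \<in> U"
    and D: "\<And>m x. x \<in> U \<Longrightarrow> (D m has_real_derivative D (Suc m) x) (at x)"
    and "Ck_on k S f"
  shows "Ck_on k S (\<lambda>z. D m (f z))"
  using assms(4)
proof (induction k arbitrary: m)
  have cont: "continuous_on S (\<lambda>z. D m (f z))" if "continuous_on S f" for m
  proof (rule continuous_on_compose2[OF _ that])
    show "continuous_on U (D m)"
      using D by (meson DERIV_continuous continuous_at_imp_continuous_on)
  qed (use assms(2) in auto)
  {
    case 0
    then show ?case using cont by simp
  next
    case (Suc k)
    have chain: "((\<lambda>z. D m (f z)) has_derivative (\<lambda>h. f' h * D (Suc m) (f z))) (at z)"
      if "z \<in> S" "(f has_derivative f') (at z)" for z f' m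
      by (rule has_derivative_compose_real[OF that(2) D[OF assms(2)[OF that(1)]]])
    have "Ck_on k S (pdiff e (\<lambda>z. D m (f z)))" if e: "e \<in> Basis" for e
    proof (rule Ck_on_cong_open[OF assms(1)])
      show "Ck_on k S (\<lambda>z. pdiff e f z * D (Suc m) (f z))"
        using Suc e Ck_on_SucD[of k S f] by (intro Ck_on_mult[OF assms(1)] Suc.IH) auto
      fix z assume z: "z \<in> S"
      obtain f' where f': "(f has_derivative f') (at z)"
        using Ck_on_Suc_has_derivative[OF assms(1) Suc.prems z] .
      show "pdiff e f z * D (Suc m) (f z) = pdiff e (\<lambda>z. D m (f z)) z"
        using pdiff_eq_has_derivative[OF f'] pdiff_eq_has_derivative[OF chain[OF z f']] by simp
    qed
    moreover have "(\<lambda>z. D m (f z)) differentiable_on S"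
      unfolding differentiable_on_def
    proof
      fix z assume z: "z \<in> S"
      obtain f' where "(f has_derivative f') (at z)"
        using Ck_on_Suc_has_derivative[OF assms(1) Suc.prems z] .
      from has_derivative_at_withinI[OF chain[OF z this]]
      show "(\<lambda>z. D m (f z)) differentiable at z within S" by (rule differentiableI)
    qed
    ultimately show ?case using Suc.prems cont by simp
  }
qed

definition powr_derivs :: "real \<Rightarrow> nat \<Rightarrow> real \<Rightarrow> real" where
  "powr_derivs p m t = (\<Prod>j<m. (p - real j)) * t powr (p - real m)"

lemma powr_derivs_0 [simp]: "powr_derivs p 0 t = t powr p"
  by (simp add: powr_derivs_def)

lemma powr_derivs_has_derivative:
  "t \<in> {0<..} \<Longrightarrow> (powr_derivs p m has_real_derivative powr_derivs p (Suc m) t) (at t)"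
  unfolding powr_derivs_def
  by (auto intro!: derivative_eq_intros simp: algebra_simps diff_diff_eq)

definition exp_minus_derivs :: "nat \<Rightarrow> real \<Rightarrow> real" where
  "exp_minus_derivs m s = (-1) ^ m * exp (- s)"

lemma exp_minus_derivs_has_derivative:
  "(exp_minus_derivs m has_real_derivative exp_minus_derivs (Suc m) s) (at s)"
  unfolding exp_minus_derivs_def by (auto intro!: derivative_eq_intros)

lemma norm_add_scaleR_unit_square:
  fixes x i :: "'a::real_inner"
  assumes "norm i = 1"
  shows "norm (x + h *\<^sub>R i) ^ 2 = norm x ^ 2 + 2 * h * (x \<bullet> i) + h ^ 2"
proof -
  have "norm (x + h *\<^sub>R i) ^ 2 = x \<bullet> x + 2 * h * (x \<bullet> i) + h ^ 2 * (i \<bullet> i)"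
    unfolding power2_norm_eq_inner
    by (simp add: inner_add_left inner_add_right inner_commute power2_eq_square algebra_simps)
  moreover have "i \<bullet> i = 1"
    using assms by (simp add: power2_norm_eq_inner[symmetric])
  moreover have "x \<bullet> x = norm x ^ 2"
    by (simp add: power2_norm_eq_inner)
  ultimately show ?thesis by simp
qed

lemma open_upper_half_space: "open (UNIV \<times> {0<..} :: ('x::real_normed_vector \<times> real) set)"
  by (intro open_Times) auto

section \<open>Power series with factorially bounded coefficients\<close>

lemma diffs_fact_bound:
  fixes c :: "nat \<Rightarrow> real"
  assumes "\<And>k. \<bar>c k\<bar> \<le> M / fact k"
  shows "\<bar>diffs c k\<bar> \<le> M / fact k"
proof -
  have "\<bar>diffs c k\<bar> = real (Suc k) * \<bar>c (Suc k)\<bar>" by (simp add: diffs_def abs_mult)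
  also have "\<dots> \<le> real (Suc k) * (M / fact (Suc k))"
    by (intro mult_left_mono assms) auto
  also have "\<dots> = M / fact k" by (simp add: fact_Suc del: of_nat_Suc)
  finally show ?thesis .
qed

lemma summable_fact_bound:
  fixes c :: "nat \<Rightarrow> real"
  assumes "\<And>k. \<bar>c k\<bar> \<le> M / fact k"
  shows "summable (\<lambda>k. c k * y ^ k)"
proof (rule summable_comparison_test)
  show "summable (\<lambda>k. M * (\<bar>y\<bar> ^ k / fact k))"
    using summable_exp[of "\<bar>y\<bar>"] by (intro summable_mult) (simp add: divide_inverse mult.commute)
  have "\<bar>c k\<bar> * \<bar>y\<bar> ^ k \<le> (M / fact k) * \<bar>y\<bar> ^ k" for k
    by (intro mult_right_mono assms) auto
  then show "\<exists>N. \<forall>k\<ge>N. norm (c k * y ^ k) \<le> M * (\<bar>y\<bar> ^ k / fact k)"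
    by (simp add: abs_mult power_abs)
qed

definition series_deriv :: "(nat \<Rightarrow> real) \<Rightarrow> nat \<Rightarrow> real \<Rightarrow> real" where
  "series_deriv c m s = (\<Sum>k. (diffs ^^ m) c k * s ^ k)"

lemma summable_series_deriv:
  fixes c :: "nat \<Rightarrow> real"
  assumes "\<And>k. \<bar>c k\<bar> \<le> M / fact k"
  shows "summable (\<lambda>k. (diffs ^^ m) c k * s ^ k)"
proof (rule summable_fact_bound)
  show "\<bar>(diffs ^^ m) c k\<bar> \<le> M / fact k" for k
    using assms by (induction m arbitrary: k) (auto intro: diffs_fact_bound)
qed

lemma series_deriv_has_derivative:
  fixes c :: "nat \<Rightarrow> real"
  assumes "\<And>k. \<bar>c k\<bar> \<le> M / fact k"
  shows "(series_deriv c m has_real_derivative series_deriv c (Suc m) s) (at s)"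
  unfolding series_deriv_def
  using termdiffs_strong_converges_everywhere[of "(diffs ^^ m) c" s]
    summable_series_deriv[OF assms] by simp

lemma sums_times_diffs:
  fixes c :: "nat \<Rightarrow> real"
  assumes "summable (\<lambda>k. diffs c k * z ^ k)"
  shows "(\<lambda>k. real k * c k * z ^ k) sums (z * (\<Sum>k. diffs c k * z ^ k))"
proof -
  have "(\<lambda>k. diffs c k * z ^ k * z) sums ((\<Sum>k. diffs c k * z ^ k) * z)"
    using assms by (intro sums_mult2 summable_sums)
  then have "(\<lambda>k. real (Suc k) * c (Suc k) * z ^ (Suc k)) sums ((\<Sum>k. diffs c k * z ^ k) * z)"
    by (simp add: diffs_def mult_ac)
  then show ?thesis
    using sums_Suc_iff[of "\<lambda>k. real k * c k * z ^ k"] by (simp add: mult.commute)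
qed

section \<open>Integrals of power weights\<close>

lemma nn_integral_powr_tail_finite:
  fixes q :: real
  assumes "1/2 < q"
  shows "(\<integral>\<^sup>+ s. ennreal (indicator {1..} s * s powr (- 2 * q)) \<partial>lborel) < \<infinity>"
proof -
  have "((\<lambda>s. s powr (- 2 * q)) has_integral - (1 powr (- 2 * q + 1)) / (- 2 * q + 1)) {1..}"
    using assms by (intro has_integral_powr_to_inf) auto
  then have "(\<integral>\<^sup>+ s. ennreal (indicator {1..} s * s powr (- 2 * q)) \<partial>lborel)
      = ennreal (- (1 powr (- 2 * q + 1)) / (- 2 * q + 1))"
    by (intro nn_integral_has_integral_lebesgue) auto
  then show ?thesis by simp
qed

lemma one_plus_square_powr_le:
  fixes q s :: real
  assumes "0 \<le> q"
  shows "(1 + s\<^sup>2) powr (- q) \<le> indicator {-1..1} s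
    + indicator {1..} s * s powr (- 2 * q) + indicator {1..} (- s) * (- s) powr (- 2 * q)"
proof -
  have tail: "(1 + y\<^sup>2) powr (- q) \<le> y powr (- 2 * q)" if "1 \<le> y" for y :: real
  proof -
    have "(1 + y\<^sup>2) powr (- q) \<le> (y powr 2) powr (- q)"
      using assms that by (intro powr_mono2') auto
    then show ?thesis by (simp add: powr_powr)
  qed
  have tail_nonneg: "0 \<le> indicator {1..} y * y powr (- 2 * q)" for y :: real
    by (simp add: indicator_def)
  consider "\<bar>s\<bar> \<le> 1" | "1 < s" | "s < -1" by linarith
  then show ?thesis
  proof cases
    case 1
    have "(1 + s\<^sup>2) powr (- q) \<le> 1 powr (- q)"
      using assms by (intro powr_mono2') auto
    then have "(1 + s\<^sup>2) powr (- q) \<le> 1"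
      by simp
    moreover have "indicator {-1..1} s = (1::real)"
      using 1 by (simp add: indicator_def abs_le_iff)
    ultimately show ?thesis
      using tail_nonneg[of s] tail_nonneg[of "- s"] by linarith
  next
    case 2
    then show ?thesis using tail[of s] by (simp add: indicator_def)
  next
    case 3
    then show ?thesis using tail[of "- s"] by (simp add: indicator_def)
  qed
qed

lemma nn_integral_one_plus_square_powr_finite:
  fixes q :: real
  assumes q: "1/2 < q"
  shows "(\<integral>\<^sup>+ s. ennreal ((1 + s\<^sup>2) powr (- q)) \<partial>lborel) < \<infinity>"
proof -
  define w where "w s = (indicator {-1..1} s :: real)" for s :: real
  define h where "h s = indicator {1..} s * s powr (- 2 * q)" for s :: real
  have [measurable]: "w \<in> borel_measurable borel" "h \<in> borel_measurable borel"
    unfolding w_def h_def by measurable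
  have w_nonneg: "0 \<le> w s" and h_nonneg: "0 \<le> h s" for s
    by (simp_all add: w_def h_def indicator_def)
  have "(\<integral>\<^sup>+ s. ennreal ((1 + s\<^sup>2) powr (- q)) \<partial>lborel)
      \<le> (\<integral>\<^sup>+ s. ennreal (w s) + ennreal (h s) + ennreal (h (- s)) \<partial>lborel)"
  proof (intro nn_integral_mono)
    fix s :: real
    have "ennreal ((1 + s\<^sup>2) powr (- q)) \<le> ennreal (w s + h s + h (- s))"
      using one_plus_square_powr_le[of q s] q by (intro ennreal_leI) (simp add: w_def h_def)
    also have "\<dots> = ennreal (w s) + ennreal (h s) + ennreal (h (- s))"
      using w_nonneg h_nonneg by (simp add: ennreal_plus)
    finally show "ennreal ((1 + s\<^sup>2) powr (- q)) \<le> ennreal (w s) + ennreal (h s) + ennreal (h (- s))" .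
  qed
  also have "\<dots> = (\<integral>\<^sup>+ s. ennreal (w s) \<partial>lborel) + (\<integral>\<^sup>+ s. ennreal (h s) \<partial>lborel)
      + (\<integral>\<^sup>+ s. ennreal (h (- s)) \<partial>lborel)"
    using nn_integral_add[of "\<lambda>s. ennreal (w s) + ennreal (h s)" lborel "\<lambda>s. ennreal (h (- s))"]
      nn_integral_add[of "\<lambda>s. ennreal (w s)" lborel "\<lambda>s. ennreal (h s)"]
    by simp
  also have "(\<integral>\<^sup>+ s. ennreal (h (- s)) \<partial>lborel) = (\<integral>\<^sup>+ s. ennreal (h s) \<partial>lborel)"
    using nn_integral_real_affine[of "\<lambda>s. ennreal (h s)" "-1" 0] by simp
  also have "(\<integral>\<^sup>+ s. ennreal (w s) \<partial>lborel) = 2"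
    by (simp add: w_def ennreal_indicator)
  also have "2 + (\<integral>\<^sup>+ s. ennreal (h s) \<partial>lborel) + (\<integral>\<^sup>+ s. ennreal (h s) \<partial>lborel) < \<infinity>"
    using nn_integral_powr_tail_finite[OF q] unfolding h_def[symmetric]
    by (simp add: less_top ennreal_add_eq_top)
  finally show ?thesis .
qed

lemma nn_integral_prod_one_plus_square_powr:
  fixes q t :: real
  assumes t: "0 < t"
  shows "(\<integral>\<^sup>+ x. ennreal (\<Prod>i\<in>Basis. (1 + (x \<bullet> i)\<^sup>2 / (4 * t)) powr (- q))
      \<partial>(lborel :: 'x::euclidean_space measure))
    = ennreal ((2 * sqrt t) ^ DIM('x)) * (\<integral>\<^sup>+ s. ennreal ((1 + s\<^sup>2) powr (- q)) \<partial>lborel) ^ DIM('x)"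
proof -
  have scaled: "(\<integral>\<^sup>+ s. ennreal ((1 + s\<^sup>2 / (4 * t)) powr (- q)) \<partial>lborel)
      = ennreal (2 * sqrt t) * (\<integral>\<^sup>+ s. ennreal ((1 + s\<^sup>2) powr (- q)) \<partial>lborel)"
  proof -
    have "2 * sqrt t \<noteq> 0" using t by simp
    from nn_integral_real_affine[OF _ this, of "\<lambda>s. ennreal ((1 + s\<^sup>2 / (4 * t)) powr (- q))" 0]
    show ?thesis using t by (simp add: power_mult_distrib)
  qed
  have "(\<integral>\<^sup>+ x. ennreal (\<Prod>i\<in>Basis. (1 + (x \<bullet> i)\<^sup>2 / (4 * t)) powr (- q)) \<partial>(lborel :: 'x measure))
      = (\<integral>\<^sup>+ x. (\<Prod>i\<in>(Basis::'x set). (\<lambda>i s. ennreal ((1 + s\<^sup>2 / (4 * t)) powr (- q))) i (x \<bullet> i))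
          \<partial>lborel)"
    by (simp add: prod_ennreal)
  also have "\<dots> = (\<Prod>i\<in>(Basis::'x set). \<integral>\<^sup>+ s. ennreal ((1 + s\<^sup>2 / (4 * t)) powr (- q)) \<partial>lborel)"
    by (rule nn_integral_lborel_prod) auto
  also have "\<dots> = ennreal ((2 * sqrt t) ^ DIM('x))
      * (\<integral>\<^sup>+ s. ennreal ((1 + s\<^sup>2) powr (- q)) \<partial>lborel) ^ DIM('x)"
    using t by (simp add: scaled power_mult_distrib ennreal_power)
  finally show ?thesis .
qed

lemma one_plus_sum_powr_le_prod:
  fixes y :: "'i \<Rightarrow> real"
  assumes "finite I" "I \<noteq> {}" "\<And>i. i \<in> I \<Longrightarrow> 0 \<le> y i" "0 \<le> p"
  shows "(1 + sum y I) powr (- p) \<le> (\<Prod>i\<in>I. (1 + y i) powr (- p / card I))"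
proof -
  have N: "card I > 0" using assms by (simp add: card_gt_0_iff)
  have sum: "0 \<le> sum y I" using assms by (intro sum_nonneg) auto
  have "(\<Prod>i\<in>I. 1 + y i) \<le> (\<Prod>i\<in>I. 1 + sum y I)"
  proof (rule prod_mono)
    fix i assume i: "i \<in> I"
    have "y i \<le> sum y I" using assms i by (intro member_le_sum) auto
    then show "0 \<le> 1 + y i \<and> 1 + y i \<le> 1 + sum y I" using assms(3)[OF i] by simp
  qed
  then have prod_le: "(\<Prod>i\<in>I. 1 + y i) \<le> (1 + sum y I) ^ card I"
    by simp
  have "(1 + sum y I) powr (- p) = ((1 + sum y I) ^ card I) powr (- p / card I)"
    using N sum by (simp add: powr_realpow[symmetric] powr_powr)
  also have "\<dots> \<le> (\<Prod>i\<in>I. 1 + y i) powr (- p / card I)"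
  proof (rule powr_mono2')
    show "- p / real (card I) \<le> 0" using assms N by simp
    show "0 < (\<Prod>i\<in>I. 1 + y i)" using assms by (intro prod_pos) (simp add: add_pos_nonneg)
  qed (rule prod_le)
  also have "\<dots> = (\<Prod>i\<in>I. (1 + y i) powr (- p / card I))"
    by (rule prod_powr_distrib)
  finally show ?thesis .
qed

lemma powr_neg_le_one_plus:
  fixes b r p :: real
  assumes "1/2 \<le> b" "0 \<le> r" "0 \<le> p"
  shows "(b + r) powr (- p) \<le> 2 powr p * (1 + r) powr (- p)"
proof -
  have "(b + r) powr (- p) \<le> ((1 + r) / 2) powr (- p)"
    using assms by (intro powr_mono2') auto
  also have "((1 + r) / 2) powr (- p) = (1 + r) powr (- p) / 2 powr (- p)"
    by (rule powr_divide)
  also have "\<dots> = 2 powr p * (1 + r) powr (- p)"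
    by (simp add: powr_minus divide_inverse mult.commute)
  finally show ?thesis .
qed

lemma nn_integral_powr_interval_finite:
  fixes C e T :: real
  assumes "-1 < e" "0 < T" "0 \<le> C"
  shows "(\<integral>\<^sup>+ t. ennreal (indicator {0<..<T} t * (C * t powr e)) \<partial>lborel) < \<infinity>"
proof -
  have "((\<lambda>t. C * t powr e) has_integral C * (T powr (e + 1) / (e + 1))) {0..T}"
    using assms by (intro has_integral_mult_right has_integral_powr_from_0) auto
  then have eq: "(\<integral>\<^sup>+ t. ennreal (indicator {0..T} t * (C * t powr e)) \<partial>lborel)
      = ennreal (C * (T powr (e + 1) / (e + 1)))"
    using assms by (intro nn_integral_has_integral_lebesgue) auto
  have "(\<integral>\<^sup>+ t. ennreal (indicator {0<..<T} t * (C * t powr e)) \<partial>lborel)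
      \<le> (\<integral>\<^sup>+ t. ennreal (indicator {0..T} t * (C * t powr e)) \<partial>lborel)"
    using assms by (intro nn_integral_mono ennreal_leI) (auto simp: indicator_def)
  also have "\<dots> < \<infinity>" unfolding eq by simp
  finally show ?thesis .
qed

lemma nn_integral_parabolic_weight_slice:
  fixes p K t :: real
  assumes t: "0 < t" and K: "0 \<le> K"
  shows "(\<integral>\<^sup>+ x. ennreal (K * t powr (- p) *
      (\<Prod>i\<in>Basis. (1 + (x \<bullet> i)\<^sup>2 / (4 * t)) powr (- p / DIM('x)))) \<partial>(lborel :: 'x::euclidean_space measure))
    = ennreal (K * 2 ^ DIM('x) * t powr (DIM('x) / 2 - p))
      * (\<integral>\<^sup>+ s. ennreal ((1 + s\<^sup>2) powr (- (p / DIM('x)))) \<partial>lborel) ^ DIM('x)"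
proof -
  define N where "N = DIM('x)"
  have "(\<integral>\<^sup>+ x. ennreal (K * t powr (- p) *
      (\<Prod>i\<in>Basis. (1 + (x \<bullet> i)\<^sup>2 / (4 * t)) powr (- p / N))) \<partial>(lborel :: 'x measure))
    = (\<integral>\<^sup>+ (x::'x). ennreal (K * t powr (- p)) *
        ennreal (\<Prod>i\<in>Basis. (1 + (x \<bullet> i)\<^sup>2 / (4 * t)) powr (- (p / N))) \<partial>lborel)"
    using K by (intro nn_integral_cong) (simp add: ennreal_mult[symmetric] prod_nonneg)
  also have "\<dots> = ennreal (K * t powr (- p)) * (\<integral>\<^sup>+ (x::'x).
      ennreal (\<Prod>i\<in>Basis. (1 + (x \<bullet> i)\<^sup>2 / (4 * t)) powr (- (p / N))) \<partial>lborel)"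
    by (rule nn_integral_cmult) measurable
  also have "\<dots> = ennreal (K * t powr (- p)) * (ennreal ((2 * sqrt t) ^ N)
      * (\<integral>\<^sup>+ s. ennreal ((1 + s\<^sup>2) powr (- (p / N))) \<partial>lborel) ^ N)"
    unfolding nn_integral_prod_one_plus_square_powr[OF t] N_def ..
  also have "\<dots> = ennreal (K * t powr (- p) * (2 * sqrt t) ^ N)
      * (\<integral>\<^sup>+ s. ennreal ((1 + s\<^sup>2) powr (- (p / N))) \<partial>lborel) ^ N"
    using K t by (simp add: ennreal_mult mult.assoc)
  also have "K * t powr (- p) * (2 * sqrt t) ^ N = K * 2 ^ N * t powr (N / 2 - p)"
  proof -
    have "sqrt t ^ N = t powr (N / 2)"
      using t by (simp add: powr_half_sqrt[symmetric] powr_realpow[symmetric] powr_powr)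
    moreover have "t powr (N / 2 - p) = t powr (N / 2) * t powr (- p)"
      by (simp add: powr_add[symmetric])
    ultimately show ?thesis
      by (simp add: power_mult_distrib mult_ac)
  qed
  finally show ?thesis unfolding N_def .
qed

lemma nn_integral_parabolic_weight_finite:
  fixes p K T :: real
  assumes q: "1/2 < p / DIM('x)" and e: "-1 < DIM('x) / 2 - p" and T: "0 < T" and K: "0 \<le> K"
  shows "(\<integral>\<^sup>+ z. ennreal (indicator {0<..<T} (snd z) * (K * snd z powr (- p) *
      (\<Prod>i\<in>Basis. (1 + (fst z \<bullet> i)\<^sup>2 / (4 * snd z)) powr (- p / DIM('x)))))
      \<partial>(lborel :: ('x::euclidean_space \<times> real) measure)) < \<infinity>"
    (is "(\<integral>\<^sup>+ z. ?W z \<partial>lborel) < \<infinity>")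
proof -
  define N where "N = DIM('x)"
  define I where "I = (\<integral>\<^sup>+ s. ennreal ((1 + s\<^sup>2) powr (- (p / N))) \<partial>lborel)"
  have I: "I < \<infinity>"
    unfolding I_def using q by (intro nn_integral_one_plus_square_powr_finite) (simp add: N_def)
  have slice: "(\<integral>\<^sup>+ x. ?W (x, t) \<partial>lborel)
      = ennreal (indicator {0<..<T} t * (K * 2 ^ N * t powr (N / 2 - p))) * I ^ N" for t
    using nn_integral_parabolic_weight_slice[of t K p, where 'x='x] K
    by (cases "t \<in> {0<..<T}") (simp_all add: I_def N_def)
  have "(\<integral>\<^sup>+ z. ?W z \<partial>lborel) = (\<integral>\<^sup>+ z. ?W z \<partial>(lborel \<Otimes>\<^sub>M lborel))"
    by (simp only: lborel_prod)
  also have "\<dots> = (\<integral>\<^sup>+ t. (\<integral>\<^sup>+ x. ?W (x, t) \<partial>lborel) \<partial>lborel)"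
    by (rule lborel_pair.nn_integral_snd[symmetric]) measurable
  also have "\<dots> = (\<integral>\<^sup>+ t. ennreal (indicator {0<..<T} t * (K * 2 ^ N * t powr (N / 2 - p))) \<partial>lborel)
      * I ^ N"
    unfolding slice by (rule nn_integral_multc) measurable
  also have "\<dots> < \<infinity>"
    using nn_integral_powr_interval_finite[of "N / 2 - p" T "K * 2 ^ N"] e T K I
    by (simp add: N_def ennreal_mult_less_top power_less_top_ennreal)
  finally show ?thesis .
qed

section \<open>Kummer's function and the similarity profile\<close>

locale kummer =
  fixes a b :: real
  assumes a_pos: "0 < a" and a_less_b: "a < b"
begin

lemma b_pos: "0 < b" using a_pos a_less_b by simp

text \<open>Taylor coefficients of Kummer's function \<open>M(b - a, b, \<cdot>)\<close>.\<close>
definition coeff :: "nat \<Rightarrow> real" where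
  "coeff k = pochhammer (b - a) k / (pochhammer b k * fact k)"

abbreviation M :: "nat \<Rightarrow> real \<Rightarrow> real" where
  "M \<equiv> series_deriv coeff"

lemma coeff_0 [simp]: "coeff 0 = 1"
  by (simp add: coeff_def)

lemma coeff_pos: "0 < coeff k"
  using a_less_b b_pos by (simp add: coeff_def pochhammer_pos)

lemma coeff_Suc: "coeff (Suc k) = coeff k * (b - a + k) / (Suc k * (b + k))"
  using b_pos by (simp add: coeff_def pochhammer_Suc field_simps)

lemma diffs_coeff: "diffs coeff k = coeff k * (b - a + k) / (b + k)"
  unfolding diffs_def coeff_Suc by (simp del: of_nat_Suc)

lemma coeff_fact_bound: "\<bar>coeff k\<bar> \<le> 1 / fact k"
proof (induction k)
  case (Suc k)
  have "(b - a + k) / (b + k) \<le> 1" using a_pos b_pos by simp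
  then have "diffs coeff k \<le> coeff k"
    using coeff_pos[of k] b_pos unfolding diffs_coeff
    by (simp add: mult_left_le times_divide_eq_right[symmetric] del: times_divide_eq_right)
  then have "real (Suc k) * coeff (Suc k) \<le> 1 / fact k"
    using Suc coeff_pos[of k] by (simp add: diffs_def)
  then show ?case
    using coeff_pos[of "Suc k"] by (simp add: field_simps del: of_nat_Suc)
qed simp

lemma M_has_derivative: "(M m has_real_derivative M (Suc m) s) (at s)"
  by (rule series_deriv_has_derivative[OF coeff_fact_bound])

lemma summable_M: "summable (\<lambda>k. (diffs ^^ m) coeff k * s ^ k)"
  by (rule summable_series_deriv[OF coeff_fact_bound])

lemma M_sums: "(\<lambda>k. (diffs ^^ m) coeff k * s ^ k) sums M m s"
  unfolding series_deriv_def by (rule summable_sums[OF summable_M])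

lemma M_0_0: "M 0 0 = 1"
  by (simp add: series_deriv_def)

lemma M_ge_1: "0 \<le> z \<Longrightarrow> 1 \<le> M 0 z"
  using sum_le_suminf[OF summable_M[of 0 z], of "{0}"] coeff_pos
  by (simp add: series_deriv_def less_imp_le)

lemma M_ode: "z * M 2 z + (b - z) * M 1 z - (b - a) * M 0 z = 0"
proof -
  have "summable (\<lambda>k. diffs (diffs coeff) k * z ^ k)"
    using summable_M[of 2 z] by (simp add: numeral_2_eq_2)
  from sums_times_diffs[OF this]
  have "(\<lambda>k. real k * diffs coeff k * z ^ k) sums (z * M 2 z)"
    by (simp add: series_deriv_def numeral_2_eq_2)
  moreover have "(\<lambda>k. real k * coeff k * z ^ k) sums (z * M 1 z)"
    using sums_times_diffs[of coeff z] summable_M[of 1 z] by (simp add: series_deriv_def)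
  ultimately have "(\<lambda>k. real k * diffs coeff k * z ^ k + b * (diffs coeff k * z ^ k)
      - real k * coeff k * z ^ k - (b - a) * (coeff k * z ^ k))
      sums (z * M 2 z + b * M 1 z - z * M 1 z - (b - a) * M 0 z)"
    using M_sums[of 1 z] M_sums[of 0 z] by (intro sums_diff sums_add sums_mult) auto
  moreover have "real k * diffs coeff k * z ^ k + b * (diffs coeff k * z ^ k)
      - real k * coeff k * z ^ k - (b - a) * (coeff k * z ^ k) = 0" for k
  proof -
    have coeff_rec: "(b + k) * diffs coeff k - (b - a + k) * coeff k = 0"
      using b_pos unfolding diffs_coeff by (simp add: add_pos_nonneg)
    have "real k * diffs coeff k * z ^ k + b * (diffs coeff k * z ^ k)
        - real k * coeff k * z ^ k - (b - a) * (coeff k * z ^ k)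
        = ((b + k) * diffs coeff k - (b - a + k) * coeff k) * z ^ k"
      by (simp add: algebra_simps)
    then show ?thesis
      by (simp only: coeff_rec mult_zero_left)
  qed
  ultimately have "(\<lambda>k. 0) sums (z * M 2 z + b * M 1 z - z * M 1 z - (b - a) * M 0 z)"
    by simp
  from sums_unique2[OF this sums_zero] show ?thesis
    by (simp add: algebra_simps)
qed

lemma second_difference_coeff:
  "(diffs ^^ 2) coeff k - 2 * diffs coeff k + coeff k = coeff k * (a * (a + 1) / ((b + k) * (b + k + 1)))"
proof -
  define v where "v = b + real k"
  have v: "0 < v" using b_pos by (simp add: v_def)
  define X Y where "X = (v - a) / v" and "Y = (v - a + 1) / (v + 1)"
  have d1: "diffs coeff k = coeff k * X"
    by (simp add: diffs_coeff X_def v_def)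
  have "diffs coeff (Suc k) = coeff (Suc k) * Y"
    by (simp add: diffs_coeff Y_def v_def algebra_simps)
  then have "(diffs ^^ 2) coeff k = real (Suc k) * coeff (Suc k) * Y"
    by (simp add: numeral_2_eq_2 diffs_def[of "diffs coeff"])
  also have "real (Suc k) * coeff (Suc k) = coeff k * X"
    using d1 by (simp add: diffs_def)
  finally have d2: "(diffs ^^ 2) coeff k = coeff k * X * Y" .
  have "(diffs ^^ 2) coeff k - 2 * diffs coeff k + coeff k = coeff k * (X * Y - 2 * X + 1)"
    unfolding d2 d1 by (simp add: algebra_simps)
  also have "X * Y - 2 * X + 1 = a * (a + 1) / (v * (v + 1))"
    using v unfolding X_def Y_def by (simp add: divide_simps) (simp add: algebra_simps)
  finally show ?thesis by (simp add: v_def)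
qed

lemma M_second_difference_nonneg: "0 \<le> z \<Longrightarrow> 0 \<le> M 2 z - 2 * M 1 z + M 0 z"
proof -
  assume z: "0 \<le> z"
  have sums: "(\<lambda>k. (diffs ^^ 2) coeff k * z ^ k - 2 * (diffs coeff k * z ^ k) + coeff k * z ^ k)
      sums (M 2 z - 2 * M 1 z + M 0 z)"
    using M_sums[of 2 z] M_sums[of 1 z] M_sums[of 0 z] by (intro sums_add sums_diff sums_mult) auto
  have nonneg: "0 \<le> (diffs ^^ 2) coeff k * z ^ k - 2 * (diffs coeff k * z ^ k) + coeff k * z ^ k" for k
  proof -
    have "0 \<le> ((diffs ^^ 2) coeff k - 2 * diffs coeff k + coeff k) * z ^ k"
      unfolding second_difference_coeff using coeff_pos[of k] a_pos b_pos z
      by (intro mult_nonneg_nonneg divide_nonneg_pos zero_le_power mult_pos_pos) simp_all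
    then show ?thesis by (simp add: algebra_simps)
  qed
  show ?thesis by (rule sums_le[OF nonneg sums_zero sums])
qed

text \<open>\<open>F(s) = e^(-s) M(b - a, b, s)\<close>, which is \<open>M(a, b, -s)\<close> by Kummer's transformation.\<close>
definition F :: "real \<Rightarrow> real" where
  "F s = exp (- s) * M 0 s"

definition F1 :: "real \<Rightarrow> real" where
  "F1 s = exp (- s) * (M 1 s - M 0 s)"

definition F2 :: "real \<Rightarrow> real" where
  "F2 s = exp (- s) * (M 2 s - 2 * M 1 s + M 0 s)"

lemma F_has_derivative: "(F has_real_derivative F1 s) (at s)"
  unfolding F_def F1_def
  by (rule derivative_eq_intros M_has_derivative refl | simp)+ (simp add: algebra_simps)

lemma F1_has_derivative: "(F1 has_real_derivative F2 s) (at s)"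
  unfolding F1_def F2_def
  by (rule derivative_eq_intros M_has_derivative refl | simp add: numeral_2_eq_2)+
    (simp add: algebra_simps numeral_2_eq_2)

lemma F_ode: "s * F2 s + (b + s) * F1 s + a * F s = 0"
proof -
  have "s * F2 s + (b + s) * F1 s + a * F s
      = exp (- s) * (s * M 2 s + (b - s) * M 1 s - (b - a) * M 0 s)"
    unfolding F_def F1_def F2_def by (simp add: algebra_simps)
  then show ?thesis using M_ode[of s] by simp
qed

lemma F_0: "F 0 = 1"
  using M_0_0 by (simp add: F_def)

lemma F_pos: "0 \<le> s \<Longrightarrow> 0 < F s"
  using M_ge_1[of s] by (simp add: F_def)

lemma F2_nonneg: "0 \<le> s \<Longrightarrow> 0 \<le> F2 s"
  using M_second_difference_nonneg[of s] by (simp add: F2_def)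

lemma F_measurable [measurable]: "F \<in> borel_measurable borel"
  using F_has_derivative
  by (intro borel_measurable_continuous_onI) (meson DERIV_continuous continuous_at_imp_continuous_on)

text \<open>By Kummer's equation, \<open>(F(s) (b + s)^a)' = - s F''(s) (b + s)^(a - 1) \<le> 0\<close>.\<close>
lemma F_le: "0 \<le> s \<Longrightarrow> F s \<le> b powr a * (b + s) powr (- a)"
proof -
  assume s: "0 \<le> s"
  define \<phi> where "\<phi> y = F y * (b + y) powr a" for y
  have "\<phi> s \<le> \<phi> 0"
  proof (rule DERIV_nonpos_imp_nonincreasing[OF s])
    fix y assume y: "0 \<le> y" "y \<le> s"
    have by0: "0 < b + y" using b_pos y by simp
    have "(\<phi> has_real_derivative F1 y * (b + y) powr a + F y * (a * (b + y) powr (a - 1))) (at y)"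
      unfolding \<phi>_def using by0 by (auto intro!: derivative_eq_intros F_has_derivative)
    moreover have "F1 y * (b + y) powr a + F y * (a * (b + y) powr (a - 1))
        = (b + y) powr (a - 1) * ((b + y) * F1 y + a * F y)"
      using by0 by (simp add: powr_diff field_simps)
    moreover have "(b + y) * F1 y + a * F y = - (y * F2 y)"
      using F_ode[of y] by (simp add: algebra_simps)
    moreover have "0 \<le> (b + y) powr (a - 1) * (y * F2 y)"
      using F2_nonneg[of y] y by simp
    ultimately show "\<exists>D. (\<phi> has_real_derivative D) (at y) \<and> D \<le> 0"
      by (metis mult_minus_right neg_le_0_iff_le)
  qed
  then have "F s * (b + s) powr a \<le> b powr a" using F_0 by (simp add: \<phi>_def)
  then show ?thesis
    using b_pos s by (simp add: powr_minus field_simps)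
qed

section \<open>The self-similar solution\<close>

definition heat_sol :: "'x::euclidean_space \<times> real \<Rightarrow> real" where
  "heat_sol z = snd z powr (- a) * F (norm (fst z) ^ 2 / (4 * snd z))"

lemma heat_sol_pos: "0 < t \<Longrightarrow> 0 < heat_sol (x, t)"
  by (simp add: heat_sol_def F_pos)

lemma heat_sol_origin: "heat_sol (0, t) = t powr (- a)"
  by (simp add: heat_sol_def F_0)

lemma heat_sol_Ck_on:
  "Ck_on k (UNIV \<times> {0<..}) (heat_sol :: 'x::euclidean_space \<times> real \<Rightarrow> real)"
proof -
  let ?S = "UNIV \<times> {0<..} :: ('x \<times> real) set"
  note open_S = open_upper_half_space[where 'x='x]
  have snd: "Ck_on k ?S snd"
    by (rule Ck_on_bounded_linear[OF bounded_linear_snd])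
  have coord: "Ck_on k ?S (\<lambda>z. fst z \<bullet> i)" for i :: 'x
    by (rule Ck_on_bounded_linear)
      (rule bounded_linear_compose[OF bounded_linear_inner_left bounded_linear_fst])
  have power: "Ck_on k ?S (\<lambda>z. powr_derivs p 0 (snd z))" for p
    by (rule Ck_on_compose_derivative_tower[OF open_S _ _ snd, where U="{0<..}"])
      (auto intro: powr_derivs_has_derivative)
  define \<rho> where "\<rho> z = (\<Sum>i\<in>Basis. (fst z \<bullet> i) * (fst z \<bullet> i)) * (powr_derivs (-1) 0 (snd z) / 4)"
    for z :: "'x \<times> real"
  have \<rho>: "Ck_on k ?S \<rho>"
    unfolding \<rho>_def divide_inverse
    by (intro Ck_on_mult[OF open_S] Ck_on_sum[OF open_S] coord power Ck_on_const) auto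
  have "Ck_on k ?S (\<lambda>z. exp_minus_derivs 0 (\<rho> z))"
    by (rule Ck_on_compose_derivative_tower[OF open_S _ _ \<rho>, where U=UNIV])
      (auto intro: exp_minus_derivs_has_derivative)
  moreover have "Ck_on k ?S (\<lambda>z. M 0 (\<rho> z))"
    by (rule Ck_on_compose_derivative_tower[OF open_S _ _ \<rho>, where U=UNIV])
      (auto intro: M_has_derivative)
  ultimately have "Ck_on k ?S (\<lambda>z. powr_derivs (-a) 0 (snd z) * (exp_minus_derivs 0 (\<rho> z) * M 0 (\<rho> z)))"
    by (intro Ck_on_mult[OF open_S] power)
  then show ?thesis
  proof (rule Ck_on_cong_open[OF open_S, rotated])
    fix z :: "'x \<times> real" assume "z \<in> ?S"
    then obtain x t where z: "z = (x, t)" and t: "t > 0" by auto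
    have "(\<Sum>i\<in>Basis. (x \<bullet> i) * (x \<bullet> i)) = norm x ^ 2"
      by (simp add: power2_norm_eq_inner euclidean_inner[of x x])
    then have "\<rho> z = norm x ^ 2 / (4 * t)"
      using t by (simp add: \<rho>_def z powr_minus field_simps)
    then show "powr_derivs (-a) 0 (snd z) * (exp_minus_derivs 0 (\<rho> z) * M 0 (\<rho> z)) = heat_sol z"
      by (simp add: heat_sol_def z exp_minus_derivs_def F_def)
  qed
qed

lemma heat_sol_differentiable:
  assumes "z \<in> UNIV \<times> {0<..}"
  shows "heat_sol differentiable (at z)"
proof -
  obtain f' where "(heat_sol has_derivative f') (at z)"
    using Ck_on_Suc_has_derivative[OF open_upper_half_space heat_sol_Ck_on assms] .
  then show ?thesis by (rule differentiableI)
qed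

definition heat_sol_dx :: "'x::euclidean_space \<Rightarrow> 'x \<times> real \<Rightarrow> real" where
  "heat_sol_dx i z =
    snd z powr (- a) * F1 (norm (fst z) ^ 2 / (4 * snd z)) * ((fst z \<bullet> i) / (2 * snd z))"

lemma pdiff_space_heat_sol:
  fixes x i :: "'x::euclidean_space"
  assumes t: "0 < t" and i: "i \<in> Basis"
  shows "pdiff (i, 0) heat_sol (x, t) = heat_sol_dx i (x, t)"
proof (rule pdiff_eq_line_derivative[OF heat_sol_differentiable])
  let ?q = "\<lambda>h. (norm x ^ 2 + 2 * h * (x \<bullet> i) + h ^ 2) / (4 * t)"
  have eq: "(\<lambda>h. heat_sol ((x, t) + h *\<^sub>R (i, 0))) = (\<lambda>h. t powr (- a) * F (?q h))"
    using i by (simp add: fun_eq_iff heat_sol_def norm_add_scaleR_unit_square)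
  have "(?q has_real_derivative (2 * (x \<bullet> i)) / (4 * t)) (at 0)"
    using t by (auto intro!: derivative_eq_intros)
  from DERIV_cmult[OF DERIV_chain2[OF F_has_derivative this]]
  show "((\<lambda>h. heat_sol ((x, t) + h *\<^sub>R (i, 0))) has_real_derivative heat_sol_dx i (x, t)) (at 0)"
    unfolding eq by (simp add: heat_sol_dx_def mult.assoc)
qed (use t in simp)

lemma heat_sol_dx_differentiable:
  assumes i: "i \<in> Basis" and z: "z \<in> UNIV \<times> {0<..}"
  shows "(heat_sol_dx i :: 'x::euclidean_space \<times> real \<Rightarrow> real) differentiable (at z)"
proof -
  have "(i, 0) \<in> (Basis :: ('x \<times> real) set)" using i by (simp add: Basis_prod_def)
  then have "Ck_on (Suc 0) (UNIV \<times> {0<..}) (pdiff (i, 0) (heat_sol :: 'x \<times> real \<Rightarrow> real))"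
    using heat_sol_Ck_on[of "Suc (Suc 0)"] unfolding Ck_on.simps(2)[of "Suc 0"] by blast
  then have "Ck_on (Suc 0) (UNIV \<times> {0<..}) (heat_sol_dx i :: 'x \<times> real \<Rightarrow> real)"
    by (rule Ck_on_cong_open[OF open_upper_half_space, rotated]) (auto simp: pdiff_space_heat_sol i)
  then obtain f' where "(heat_sol_dx i has_derivative f') (at z)"
    using Ck_on_Suc_has_derivative[OF open_upper_half_space _ z] by blast
  then show ?thesis by (rule differentiableI)
qed

lemma pdiff2_space_heat_sol:
  fixes x i :: "'x::euclidean_space"
  assumes t: "0 < t" and i: "i \<in> Basis"
  shows "pdiff (i, 0) (pdiff (i, 0) heat_sol) (x, t) = t powr (- a) *
    (F2 (norm x ^ 2 / (4 * t)) * (x \<bullet> i) ^ 2 / (4 * t ^ 2) + F1 (norm x ^ 2 / (4 * t)) / (2 * t))"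
proof -
  have "pdiff (i, 0) (pdiff (i, 0) heat_sol) (x, t) = pdiff (i, 0) (heat_sol_dx i) (x, t)"
    by (rule pdiff_cong_open[OF open_upper_half_space]) (use t i pdiff_space_heat_sol in auto)
  also have "\<dots> = t powr (- a) *
    (F2 (norm x ^ 2 / (4 * t)) * (x \<bullet> i) ^ 2 / (4 * t ^ 2) + F1 (norm x ^ 2 / (4 * t)) / (2 * t))"
  proof (rule pdiff_eq_line_derivative[OF heat_sol_dx_differentiable[OF i]])
    have ii: "i \<bullet> i = 1" using i by simp
    let ?q = "\<lambda>h. (norm x ^ 2 + 2 * h * (x \<bullet> i) + h ^ 2) / (4 * t)"
    have eq: "(\<lambda>h. heat_sol_dx i ((x, t) + h *\<^sub>R (i, 0)))
        = (\<lambda>h. t powr (- a) * (F1 (?q h) * ((x \<bullet> i + h) / (2 * t))))"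
      using i by (simp add: fun_eq_iff heat_sol_dx_def norm_add_scaleR_unit_square inner_add_left ii)
    have dq: "(?q has_real_derivative (2 * (x \<bullet> i)) / (4 * t)) (at 0)"
      using t by (auto intro!: derivative_eq_intros)
    have dl: "((\<lambda>h. (x \<bullet> i + h) / (2 * t)) has_real_derivative 1 / (2 * t)) (at 0)"
      using t by (auto intro!: derivative_eq_intros)
    have "((\<lambda>h. F1 (?q h) * ((x \<bullet> i + h) / (2 * t))) has_real_derivative
        F2 (norm x ^ 2 / (4 * t)) * (x \<bullet> i) ^ 2 / (4 * t ^ 2) + F1 (norm x ^ 2 / (4 * t)) / (2 * t))
        (at 0)"
      using DERIV_mult[OF DERIV_chain2[OF F1_has_derivative dq] dl]
      by (rule DERIV_cong) (use t in \<open>simp add: power2_eq_square field_simps\<close>)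
    from DERIV_cmult[OF this]
    show "((\<lambda>h. heat_sol_dx i ((x, t) + h *\<^sub>R (i, 0))) has_real_derivative t powr (- a) *
        (F2 (norm x ^ 2 / (4 * t)) * (x \<bullet> i) ^ 2 / (4 * t ^ 2) + F1 (norm x ^ 2 / (4 * t)) / (2 * t)))
        (at 0)"
      unfolding eq .
  qed (use t in simp)
  finally show ?thesis .
qed

lemma pdiff_time_heat_sol:
  fixes x :: "'x::euclidean_space"
  assumes t: "0 < t"
  shows "pdiff (0, 1) heat_sol (x, t) = t powr (- a) / t *
    (- a * F (norm x ^ 2 / (4 * t)) - norm x ^ 2 / (4 * t) * F1 (norm x ^ 2 / (4 * t)))"
proof (rule pdiff_eq_line_derivative[OF heat_sol_differentiable])
  let ?q = "\<lambda>h. norm x ^ 2 / (4 * (t + h))"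
  have eq: "(\<lambda>h. heat_sol ((x, t) + h *\<^sub>R (0, 1))) = (\<lambda>h. (t + h) powr (- a) * F (?q h))"
    by (simp add: fun_eq_iff heat_sol_def)
  have dq: "(?q has_real_derivative - (norm x ^ 2 * 4) / (4 * t) ^ 2) (at 0)"
    using t by (auto intro!: derivative_eq_intros simp: power2_eq_square)
  have dp: "((\<lambda>h. (t + h) powr (- a)) has_real_derivative - a * t powr (- a - 1)) (at 0)"
    using t by (auto intro!: derivative_eq_intros)
  have "((\<lambda>h. (t + h) powr (- a) * F (?q h)) has_real_derivative t powr (- a) / t *
      (- a * F (norm x ^ 2 / (4 * t)) - norm x ^ 2 / (4 * t) * F1 (norm x ^ 2 / (4 * t)))) (at 0)"
    using DERIV_mult[OF dp DERIV_chain2[OF F_has_derivative dq]]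
    by (rule DERIV_cong) (use t in \<open>simp add: powr_diff power2_eq_square field_simps\<close>)
  then show "((\<lambda>h. heat_sol ((x, t) + h *\<^sub>R (0, 1))) has_real_derivative t powr (- a) / t *
      (- a * F (norm x ^ 2 / (4 * t)) - norm x ^ 2 / (4 * t) * F1 (norm x ^ 2 / (4 * t)))) (at 0)"
    unfolding eq .
qed (use t in simp)

text \<open>The heat equation for \<open>heat_sol\<close> is Kummer's equation for \<open>F\<close>, because \<open>b = n/2\<close>.\<close>
lemma heat_sol_heat_equation:
  fixes x :: "'x::euclidean_space"
  assumes t: "0 < t" and b: "b = DIM('x) / 2"
  shows "pdiff (0, 1) heat_sol (x, t) = (\<Sum>i\<in>Basis. pdiff (i, 0) (pdiff (i, 0) heat_sol) (x, t))"
proof -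
  define r where "r = norm x ^ 2 / (4 * t)"
  have "(\<Sum>i\<in>Basis. pdiff (i, 0) (pdiff (i, 0) heat_sol) (x, t))
      = (\<Sum>i\<in>Basis. t powr (- a) * (F2 r * (x \<bullet> i) ^ 2 / (4 * t ^ 2) + F1 r / (2 * t)))"
    using t by (intro sum.cong) (simp_all add: pdiff2_space_heat_sol r_def)
  also have "\<dots> = t powr (- a) * (F2 r * (\<Sum>i\<in>Basis. (x \<bullet> i) ^ 2) / (4 * t ^ 2) + DIM('x) * F1 r / (2 * t))"
    by (simp add: sum.distrib flip: sum_distrib_left sum_divide_distrib)
  also have "(\<Sum>i\<in>Basis. (x \<bullet> i) ^ 2) = 4 * t * r"
    using t unfolding r_def power2_norm_eq_inner euclidean_inner[of x x] by (simp add: power2_eq_square)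
  also have "t powr (- a) * (F2 r * (4 * t * r) / (4 * t ^ 2) + DIM('x) * F1 r / (2 * t))
      = t powr (- a) / t * (r * F2 r + b * F1 r)"
    using t b by (simp add: power2_eq_square field_simps)
  also have "r * F2 r + b * F1 r = - a * F r - r * F1 r"
    using F_ode[of r] by (simp add: algebra_simps)
  finally show ?thesis
    using t by (simp add: pdiff_time_heat_sol r_def)
qed

lemma heat_sol_powr_le:
  fixes x :: "'x::euclidean_space"
  assumes t: "0 < t" and lam: "0 \<le> lam" and b: "1/2 \<le> b"
  shows "\<bar>heat_sol (x, t)\<bar> powr lam \<le> (2 * b) powr (a * lam) * t powr (- (a * lam)) *
    (\<Prod>i\<in>Basis. (1 + (x \<bullet> i)\<^sup>2 / (4 * t)) powr (- (a * lam) / DIM('x)))"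
    (is "_ \<le> _ * ?P")
proof -
  define r where "r = norm x ^ 2 / (4 * t)"
  have r: "0 \<le> r" using t by (simp add: r_def)
  have r_sum: "r = (\<Sum>i\<in>Basis. (x \<bullet> i)\<^sup>2 / (4 * t))"
    unfolding r_def power2_norm_eq_inner euclidean_inner[of x x]
    by (simp add: power2_eq_square sum_divide_distrib)
  have "(b + r) powr (- (a * lam)) \<le> 2 powr (a * lam) * (1 + r) powr (- (a * lam))"
    using powr_neg_le_one_plus[OF b r] a_pos lam by simp
  also have "\<dots> \<le> 2 powr (a * lam) * ?P"
    unfolding r_sum using t a_pos lam by (intro mult_left_mono one_plus_sum_powr_le_prod) auto
  finally have decay: "(b + r) powr (- (a * lam)) \<le> 2 powr (a * lam) * ?P" .
  have "\<bar>heat_sol (x, t)\<bar> powr lam = (t powr (- a) * F r) powr lam"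
    using F_pos[OF r] t by (simp add: heat_sol_def r_def)
  also have "\<dots> \<le> (t powr (- a) * (b powr a * (b + r) powr (- a))) powr lam"
    using F_le[OF r] F_pos[OF r] lam by (intro powr_mono2 mult_left_mono) auto
  also have "\<dots> = t powr (- (a * lam)) * b powr (a * lam) * (b + r) powr (- (a * lam))"
    by (simp add: powr_mult powr_powr)
  also have "\<dots> \<le> t powr (- (a * lam)) * b powr (a * lam) * (2 powr (a * lam) * ?P)"
    using decay by (intro mult_left_mono) auto
  also have "\<dots> = (2 * b) powr (a * lam) * t powr (- (a * lam)) * ?P"
    by (simp only: powr_mult mult_ac)
  finally show ?thesis .
qed

lemma heat_sol_powr_integrable:
  assumes lam: "0 \<le> lam" and b: "1/2 \<le> b"
    and q: "1/2 < a * lam / DIM('x)" and e: "-1 < DIM('x) / 2 - a * lam" and T: "0 < T"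
  shows "set_integrable lborel (UNIV \<times> {0<..<T})
    (\<lambda>z::'x::euclidean_space \<times> real. \<bar>heat_sol z\<bar> powr lam)"
proof -
  have ind: "indicator (UNIV \<times> {0<..<T}) z = (indicator {0<..<T} (snd z) :: real)" for z :: "'x \<times> real"
    by (cases z) (simp add: indicator_def)
  have "(\<lambda>z::'x \<times> real. indicator {0<..<T} (snd z) *\<^sub>R \<bar>heat_sol z\<bar> powr lam)
      \<in> borel_measurable (lborel \<Otimes>\<^sub>M lborel)"
    unfolding heat_sol_def by measurable
  then have meas: "(\<lambda>z::'x \<times> real. indicator (UNIV \<times> {0<..<T}) z *\<^sub>R \<bar>heat_sol z\<bar> powr lam)
      \<in> borel_measurable lborel"
    unfolding ind by (simp only: lborel_prod)
  define W where "W z = ennreal (indicator {0<..<T} (snd z) * ((2 * b) powr (a * lam) *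
    snd z powr (- (a * lam)) * (\<Prod>i\<in>Basis. (1 + (fst z \<bullet> i)\<^sup>2 / (4 * snd z)) powr (- (a * lam) / DIM('x)))))"
    for z :: "'x \<times> real"
  have bound: "ennreal (norm (indicator (UNIV \<times> {0<..<T}) z *\<^sub>R \<bar>heat_sol z\<bar> powr lam)) \<le> W z"
    for z :: "'x \<times> real"
  proof (cases "snd z \<in> {0<..<T}")
    case True
    obtain x t where z: "z = (x, t)" by (cases z)
    have "0 < t" using True z by simp
    from heat_sol_powr_le[OF this lam b, of x] show ?thesis
      using True z unfolding W_def by (intro ennreal_leI) (simp add: indicator_def)
  qed (simp add: ind W_def)
  have "(\<integral>\<^sup>+ z. ennreal (norm (indicator (UNIV \<times> {0<..<T}) z *\<^sub>R \<bar>heat_sol z\<bar> powr lam))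
      \<partial>(lborel :: ('x \<times> real) measure)) \<le> (\<integral>\<^sup>+ z. W z \<partial>lborel)"
    by (intro nn_integral_mono bound)
  also have "\<dots> < \<infinity>"
    unfolding W_def using q e T by (intro nn_integral_parabolic_weight_finite) auto
  finally show ?thesis
    unfolding set_integrable_def using meas by (simp add: integrable_iff_bounded)
qed

end

lemma heat_exponent_conditions:
  fixes n lam \<gamma> \<epsilon> :: real
  assumes n: "1 \<le> n" and lam: "(n + 2) / n \<le> lam" and \<epsilon>: "0 < \<epsilon>" "\<epsilon> < 1"
    and \<gamma>: "\<gamma> = (n + 2 - \<epsilon>) / (2 * lam)"
  shows "0 < \<gamma>" "\<gamma> < n / 2" "0 \<le> lam" "1/2 < \<gamma> * lam / n" "-1 < n / 2 - \<gamma> * lam"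
proof -
  have lam_n: "n + 2 \<le> lam * n" using lam n by (simp add: field_simps)
  then have "0 < lam * n" using n by linarith
  then have lam_pos: "0 < lam" using n by (simp add: zero_less_mult_iff)
  then have \<gamma>_lam: "\<gamma> * lam = (n + 2 - \<epsilon>) / 2" using \<gamma> by simp
  show "0 < \<gamma>" unfolding \<gamma> using \<epsilon> n lam_pos by simp
  have "\<gamma> * lam < n / 2 * lam" using \<gamma>_lam lam_n \<epsilon> by (simp add: field_simps)
  then show "\<gamma> < n / 2" using lam_pos by simp
  show "0 \<le> lam" using lam_pos by simp
  show "1/2 < \<gamma> * lam / n" unfolding \<gamma>_lam using n \<epsilon> by (simp add: field_simps)
  show "-1 < n / 2 - \<gamma> * lam" unfolding \<gamma>_lam using \<epsilon> by (simp add: field_simps)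
qed

theorem theorem1p2:
  fixes lam \<gamma> \<epsilon> :: real
  assumes "lam \<ge> (real CARD('n) + 2) / real CARD('n)"
    and "0 < \<epsilon>" and "\<epsilon> < 1"
    and "\<gamma> = (real CARD('n) + 2 - \<epsilon>) / (2 * lam)"
  shows "\<exists>u :: (real^'n) \<times> real \<Rightarrow> real.
    smooth_on (UNIV \<times> {0<..}) u
    \<and> (\<forall>x t. t > 0 \<longrightarrow> u (x, t) > 0)
    \<and> (\<forall>x t. t > 0 \<longrightarrow>
          pdiff (0, 1) u (x, t) = (\<Sum>i\<in>Basis. pdiff (i, 0) (pdiff (i, 0) u) (x, t)))
    \<and> (\<forall>T>0. set_integrable lborel (UNIV \<times> {0<..<T}) (\<lambda>z. \<bar>u z\<bar> powr lam))
    \<and> (\<forall>t>0. u (0, t) = t powr (- \<gamma>))"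
proof -
  have n: "1 \<le> real CARD('n)" by simp
  note exponents = heat_exponent_conditions[OF n assms]
  interpret kummer \<gamma> "real CARD('n) / 2"
    using exponents by unfold_locales
  show ?thesis
  proof (intro exI[of _ "heat_sol :: (real^'n) \<times> real \<Rightarrow> real"] conjI allI impI)
    show "smooth_on (UNIV \<times> {0<..}) heat_sol"
      unfolding smooth_on_def using heat_sol_Ck_on by blast
    show "0 < heat_sol (x, t)" if "0 < t" for x :: "real^'n" and t
      using that by (rule heat_sol_pos)
    show "pdiff (0, 1) heat_sol (x, t) = (\<Sum>i\<in>Basis. pdiff (i, 0) (pdiff (i, 0) heat_sol) (x, t))"
      if "0 < t" for x :: "real^'n" and t
      using that by (rule heat_sol_heat_equation) simp
    show "set_integrable lborel (UNIV \<times> {0<..<T}) (\<lambda>z::(real^'n) \<times> real. \<bar>heat_sol z\<bar> powr lam)"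
      if "0 < T" for T
      using exponents that by (intro heat_sol_powr_integrable) simp_all
    show "heat_sol (0, t) = t powr (- \<gamma>)" for t
      by (rule heat_sol_origin)
  qed
qed

end
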